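(* Consider an $N$-agent Markov decision process with finite state space $\mathcal{S}$, finite individual action spaces $\mathcal{A}^i$, joint action space $\mathcal{A}=\prod_{i=1}^N\mathcal{A}^i$, bounded individual rewards and discount factor $\gamma\in(0,1)$. Let $\pi^{ii}_{old},\pi^{ii}_{new}$ ($i=1,\dots,N$) be individual policies, $\boldsymbol{\pi}_{old}(\boldsymbol{a}|s)=\prod_i\pi^{ii}_{old}(a^i|s)$ and $\boldsymbol{\pi}_{new}(\boldsymbol{a}|s)=\prod_i\pi^{ii}_{new}(a^i|s)$, and let $\boldsymbol{\tilde{\Pi}}_{new}=(\boldsymbol{\tilde{\pi}}^1_{new},\dots,\boldsymbol{\tilde{\pi}}^N_{new})$ with $\boldsymbol{\tilde{\pi}}^i_{new}(\boldsymbol{a}|s)=\prod_{j}\pi^{ij}_{new}(a^j|s)$, where for $j\neq i$ the $\pi^{ij}_{new}$ are arbitrary policies for agent $j$. Then $$\eta(\boldsymbol{\pi}_{new}) \geq \eta(\boldsymbol{\pi}_{old}) + \zeta_{\boldsymbol{\pi}_{old}}(\boldsymbol{\tilde{\Pi}}_{new}) - C \sum_{i=1}^N D_{KL}^{max}(\pi^{ii}_{old} \,\|\, \pi^{ii}_{new}) - f^{\boldsymbol{\pi}_{old}} - \sum_{i=1}^N \frac{1}{2} \max_{s, \boldsymbol{a}} \big| A_i^{\boldsymbol{\pi}_{old}}(s, \boldsymbol{a}) \big| \cdot \sum_{s, \boldsymbol{a}}\big(\boldsymbol{\tilde{\pi}}^i_{new}(\boldsymbol{a}|s) - \boldsymbol{\pi}_{new}(\boldsymbol{a}|s)\big)^2,$$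 where $C = \frac{4\gamma \max_{s, \boldsymbol{a}}|\sum_{i} A_i^{\boldsymbol{\pi}_{old}}(s, \boldsymbol{a})|}{(1-\gamma)^2}$, $D_{KL}^{max}(\pi^{ii}_{old}\|\pi^{ii}_{new})=\max_s D_{KL}(\pi^{ii}_{old}(\cdot|s)\|\pi^{ii}_{new}(\cdot|s))$, and $f^{\boldsymbol{\pi}_{old}} = \sum_{i} \frac{1}{2} \max_{s, \boldsymbol{a}} | A_i^{\boldsymbol{\pi}_{old}}(s, \boldsymbol{a}) | \cdot |\mathcal{A}| \cdot \sum_s (d^{\boldsymbol{\pi}_{old}}(s))^2$.
   Context: Trajectories under a joint policy $\boldsymbol{\pi}$ are generated by $s_0\sim d(s_0)$, $\boldsymbol{a}_t\sim\boldsymbol{\pi}(\cdot|s_t)$, $s_{t+1}\sim\mathcal{P}(\cdot|s_t,\boldsymbol{a}_t)$, rewards $r_t^i=\mathcal{R}^i(s_t,\boldsymbol{a}_t)$. The collective objective is $\eta(\boldsymbol{\pi})=\sum_{i=1}^N\mathbb{E}_{\tau\sim\boldsymbol{\pi}}[\sum_{t\ge0}\gamma^tr^i_t]$. Individual value functions $V_i^{\boldsymbol{\pi}}(s)=\mathbb{E}[\sum_{t\ge0}\gamma^t r^i_t\mid s_0=s]$, $Q_i^{\boldsymbol{\pi}}(s,\boldsymbol{a})=\mathbb{E}[\sum_{t\ge0}\gamma^t r^i_t\mid s_0=s,\boldsymbol{a}_0=\boldsymbol{a}]$, advantage $A_i^{\boldsymbol{\pi}}=Q_i^{\boldsymbol{\pi}}-V_i^{\boldsymbol{\pi}}$.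 State visitation distribution $d^{\boldsymbol{\pi}}(s)=\sum_{t\ge0}\gamma^tP(s_t=s\mid\boldsymbol{\pi})$. For a collection of suggesting joint policies $\boldsymbol{\tilde{\Pi}}=(\boldsymbol{\tilde{\pi}}^1,\dots,\boldsymbol{\tilde{\pi}}^N)$, $\zeta_{\boldsymbol{\pi}'}(\boldsymbol{\tilde{\Pi}})=\sum_{i}\sum_s d^{\boldsymbol{\pi}'}(s)\sum_{\boldsymbol{a}}\boldsymbol{\tilde{\pi}}^i(\boldsymbol{a}|s)A_i^{\boldsymbol{\pi}'}(s,\boldsymbol{a})$. *)

theory Defs
  imports Complex_Main
begin

text \<open>Multi-agent MDP with agent type 'i (finite), finite state type 's,
  actions of agent i drawn from the finite set Act i (subset of a common type 'a),
  joint actions = functions 'i => 'a with a i in Act i.\<close>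

definition jointActs :: "('i \<Rightarrow> 'a set) \<Rightarrow> ('i \<Rightarrow> 'a) set" where
  "jointActs Act = {a. \<forall>i. a i \<in> Act i}"

definition is_policy :: "'b set \<Rightarrow> ('s \<Rightarrow> 'b \<Rightarrow> real) \<Rightarrow> bool" where
  "is_policy A p \<longleftrightarrow> (\<forall>s. (\<forall>a\<in>A. 0 \<le> p s a) \<and> (\<Sum>a\<in>A. p s a) = 1)"

definition prod_policy :: "('i::finite \<Rightarrow> 's \<Rightarrow> 'a \<Rightarrow> real) \<Rightarrow> 's \<Rightarrow> ('i \<Rightarrow> 'a) \<Rightarrow> real" where
  "prod_policy p s a = (\<Prod>i\<in>UNIV. p i s (a i))"

fun state_dist :: "('s::finite \<Rightarrow> 'b \<Rightarrow> 's \<Rightarrow> real) \<Rightarrow> 'b set \<Rightarrow> ('s \<Rightarrow> 'b \<Rightarrow> real)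
    \<Rightarrow> ('s \<Rightarrow> real) \<Rightarrow> nat \<Rightarrow> 's \<Rightarrow> real" where
  "state_dist P JA pol mu 0 = mu"
| "state_dist P JA pol mu (Suc t) =
     (\<lambda>s'. \<Sum>s\<in>UNIV. \<Sum>a\<in>JA. state_dist P JA pol mu t s * pol s a * P s a s')"

definition exp_reward :: "('s::finite \<Rightarrow> 'b \<Rightarrow> 's \<Rightarrow> real) \<Rightarrow> 'b set \<Rightarrow> ('s \<Rightarrow> 'b \<Rightarrow> real)
    \<Rightarrow> ('s \<Rightarrow> 'b \<Rightarrow> real) \<Rightarrow> ('s \<Rightarrow> real) \<Rightarrow> nat \<Rightarrow> real" where
  "exp_reward P JA pol Ri mu t =
     (\<Sum>s\<in>UNIV. state_dist P JA pol mu t s * (\<Sum>a\<in>JA. pol s a * Ri s a))"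

definition Vfun :: "('s::finite \<Rightarrow> 'b \<Rightarrow> 's \<Rightarrow> real) \<Rightarrow> 'b set \<Rightarrow> real \<Rightarrow> ('s \<Rightarrow> 'b \<Rightarrow> real)
    \<Rightarrow> ('s \<Rightarrow> 'b \<Rightarrow> real) \<Rightarrow> 's \<Rightarrow> real" where
  "Vfun P JA g pol Ri s =
     (\<Sum>t. g ^ t * exp_reward P JA pol Ri (\<lambda>s'. if s' = s then 1 else 0) t)"

text \<open>Q_i(s,a) = E[sum_t gamma^t r^i_t | s_0 = s, a_0 = a]: the t = 0 term is Ri s a,
  and for t >= 1 the state s_1 is distributed as P s a.\<close>
definition Qfun :: "('s::finite \<Rightarrow> 'b \<Rightarrow> 's \<Rightarrow> real) \<Rightarrow> 'b set \<Rightarrow> real \<Rightarrow> ('s \<Rightarrow> 'b \<Rightarrow> real)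
    \<Rightarrow> ('s \<Rightarrow> 'b \<Rightarrow> real) \<Rightarrow> 's \<Rightarrow> 'b \<Rightarrow> real" where
  "Qfun P JA g pol Ri s a =
     Ri s a + (\<Sum>t. g ^ Suc t * exp_reward P JA pol Ri (P s a) t)"

definition Adv :: "('s::finite \<Rightarrow> 'b \<Rightarrow> 's \<Rightarrow> real) \<Rightarrow> 'b set \<Rightarrow> real \<Rightarrow> ('s \<Rightarrow> 'b \<Rightarrow> real)
    \<Rightarrow> ('s \<Rightarrow> 'b \<Rightarrow> real) \<Rightarrow> 's \<Rightarrow> 'b \<Rightarrow> real" where
  "Adv P JA g pol Ri s a = Qfun P JA g pol Ri s a - Vfun P JA g pol Ri s"

definition eta :: "('s::finite \<Rightarrow> 'b \<Rightarrow> 's \<Rightarrow> real) \<Rightarrow> 'b set \<Rightarrow> real \<Rightarrow> ('s \<Rightarrow> real)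
    \<Rightarrow> ('i::finite \<Rightarrow> 's \<Rightarrow> 'b \<Rightarrow> real) \<Rightarrow> ('s \<Rightarrow> 'b \<Rightarrow> real) \<Rightarrow> real" where
  "eta P JA g d0 R pol = (\<Sum>i\<in>UNIV. \<Sum>t. g ^ t * exp_reward P JA pol (R i) d0 t)"

definition visit :: "('s::finite \<Rightarrow> 'b \<Rightarrow> 's \<Rightarrow> real) \<Rightarrow> 'b set \<Rightarrow> real \<Rightarrow> ('s \<Rightarrow> real)
    \<Rightarrow> ('s \<Rightarrow> 'b \<Rightarrow> real) \<Rightarrow> 's \<Rightarrow> real" where
  "visit P JA g d0 pol s = (\<Sum>t. g ^ t * state_dist P JA pol d0 t s)"

definition zeta :: "('s::finite \<Rightarrow> 'b \<Rightarrow> 's \<Rightarrow> real) \<Rightarrow> 'b set \<Rightarrow> real \<Rightarrow> ('s \<Rightarrow> real)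
    \<Rightarrow> ('i::finite \<Rightarrow> 's \<Rightarrow> 'b \<Rightarrow> real) \<Rightarrow> ('s \<Rightarrow> 'b \<Rightarrow> real)
    \<Rightarrow> ('i \<Rightarrow> 's \<Rightarrow> 'b \<Rightarrow> real) \<Rightarrow> real" where
  "zeta P JA g d0 R pol' Pit =
     (\<Sum>i\<in>UNIV. \<Sum>s\<in>UNIV. visit P JA g d0 pol' s *
        (\<Sum>a\<in>JA. Pit i s a * Adv P JA g pol' (R i) s a))"

text \<open>KL divergence of distributions on A (convention 0 ln 0 = 0).\<close>
definition KL :: "'a set \<Rightarrow> ('a \<Rightarrow> real) \<Rightarrow> ('a \<Rightarrow> real) \<Rightarrow> real" where
  "KL A p q = (\<Sum>a\<in>A. p a * ln (p a / q a))"

definition KLmax :: "'a set \<Rightarrow> ('s::finite \<Rightarrow> 'a \<Rightarrow> real) \<Rightarrow> ('s \<Rightarrow> 'a \<Rightarrow> real) \<Rightarrow> real" where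
  "KLmax A p q = Max (range (\<lambda>s. KL A (p s) (q s)))"

end

theory Submission
  imports Defs "HOL-Analysis.Analysis"
begin

text \<open>By the performance difference lemma, \<open>\<eta>(\<pi>_new) - \<eta>(\<pi>_old)\<close> is the discounted sum
  over \<open>t\<close> of the expected total advantage of \<open>\<pi>_old\<close> at the time-\<open>t\<close> state of \<open>\<pi>_new\<close>.
  Taking the state distributions of \<open>\<pi>_old\<close> instead turns this sum into \<open>\<zeta>\<close> of the constant
  family \<open>(\<pi>_new, \<dots>, \<pi>_new)\<close>. If \<open>c\<close> bounds the \<open>L\<^sub>1\<close>-distance of the joint policies, the
  state distributions drift apart by at most \<open>c\<close> per step, and the total advantage of \<open>\<pi>_new\<close>
  is at most \<open>c \<epsilon>\<close> because its \<open>\<pi>_old\<close>-average vanishes; so the change costs at most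
  \<open>\<Sum>\<^sub>t t \<gamma>\<^sup>t c\<^sup>2 \<epsilon> = \<gamma> c\<^sup>2 \<epsilon> / (1 - \<gamma>)\<^sup>2\<close>. The Bhattacharyya coefficient is multiplicative over
  agents, which yields \<open>c\<^sup>2 \<le> 4 \<Sum>\<^sub>i KLmax(\<pi>\<^sup>i\<^sup>i_old, \<pi>\<^sup>i\<^sup>i_new)\<close>. Finally, replacing \<open>\<pi>_new\<close> by
  the suggested policy of agent \<open>i\<close> in the \<open>i\<close>-th summand of \<open>\<zeta>\<close> costs at most the two
  quadratic terms, by \<open>2xy \<le> x\<^sup>2 + y\<^sup>2\<close>.\<close>

section \<open>Distributions on finite sets\<close>

definition is_distr :: "'a set \<Rightarrow> ('a \<Rightarrow> real) \<Rightarrow> bool" where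
  "is_distr A p \<longleftrightarrow> (\<forall>x\<in>A. 0 \<le> p x) \<and> sum p A = 1"

lemma is_distr_finite: "is_distr A p \<Longrightarrow> finite A"
  unfolding is_distr_def by (metis sum.infinite zero_neq_one)

lemma is_policy_iff_is_distr: "is_policy A pol \<longleftrightarrow> (\<forall>s. is_distr A (pol s))"
  by (simp add: is_policy_def is_distr_def)

lemma abs_expectation_le:
  assumes "is_distr A p" and "\<And>x. x \<in> A \<Longrightarrow> \<bar>f x\<bar> \<le> B"
  shows "\<bar>\<Sum>x\<in>A. p x * f x\<bar> \<le> B"
proof -
  have "\<bar>\<Sum>x\<in>A. p x * f x\<bar> \<le> (\<Sum>x\<in>A. p x * B)"
    using assms by (intro order_trans[OF sum_abs sum_mono])
      (auto simp: is_distr_def abs_mult intro: mult_left_mono)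
  also have "\<dots> = B"
    using assms(1) by (simp add: is_distr_def flip: sum_distrib_right)
  finally show ?thesis .
qed

lemma is_distr_prod_PiE:
  assumes "finite I" and distr: "\<And>i. i \<in> I \<Longrightarrow> is_distr (A i) (p i)"
  shows "is_distr (PiE I A) (\<lambda>a. \<Prod>i\<in>I. p i (a i))"
  unfolding is_distr_def
proof
  show "\<forall>a\<in>PiE I A. 0 \<le> (\<Prod>i\<in>I. p i (a i))"
    using distr by (auto simp: is_distr_def intro!: prod_nonneg)
  have "(\<Sum>a\<in>PiE I A. \<Prod>i\<in>I. p i (a i)) = (\<Prod>i\<in>I. sum (p i) (A i))"
    using assms is_distr_finite by (intro prod_sum_PiE[symmetric]) auto
  also have "\<dots> = 1"
    using distr by (simp add: is_distr_def)
  finally show "(\<Sum>a\<in>PiE I A. \<Prod>i\<in>I. p i (a i)) = 1" .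
qed

lemma jointActs_eq_PiE: "jointActs Act = PiE UNIV Act"
  unfolding jointActs_def by (auto simp: PiE_UNIV_domain Pi_def)

lemma is_policy_prod_policy:
  assumes "\<And>i. is_policy (Act i) (p i)"
  shows "is_policy (jointActs Act) (prod_policy p)"
proof -
  have "is_distr (PiE UNIV Act) (\<lambda>a. \<Prod>i\<in>UNIV. p i s (a i))" for s
    using assms by (intro is_distr_prod_PiE) (auto simp: is_policy_iff_is_distr)
  then show ?thesis
    by (simp add: is_policy_iff_is_distr jointActs_eq_PiE prod_policy_def[abs_def])
qed

section \<open>Bhattacharyya coefficient and KL divergence\<close>

lemma real_sqrt_prod: "sqrt (prod f A) = (\<Prod>x\<in>A. sqrt (f x))"
  by (induction A rule: infinite_finite_induct) (simp_all add: real_sqrt_mult)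

lemma one_minus_prod_le_sum:
  fixes x :: "'i \<Rightarrow> real"
  assumes "finite I" and "\<And>i. i \<in> I \<Longrightarrow> 0 \<le> x i \<and> x i \<le> 1"
  shows "1 - prod x I \<le> (\<Sum>i\<in>I. 1 - x i)"
  using assms
proof (induction I rule: finite_induct)
  case (insert j I)
  have "0 \<le> (1 - x j) * (1 - prod x I)"
    using insert.prems by (simp add: prod_le_1)
  then show ?case
    using insert by (simp add: algebra_simps)
qed simp

lemma hellinger_term_le_KL_term:
  fixes p q :: real
  assumes "0 \<le> p" and "0 < p \<Longrightarrow> 0 < q"
  shows "2 * (p - sqrt p * sqrt q) \<le> p * ln (p / q)"
proof (cases "p = 0")
  case False
  then have p: "0 < p" and q: "0 < q" using assms by auto
  define y where "y = sqrt q / sqrt p"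
  have "p * y = sqrt p * sqrt q"
    using p by (simp add: y_def real_div_sqrt flip: times_divide_eq_left)
  moreover have "p * ln (p / q) = - 2 * (p * ln y)"
    using p q by (simp add: y_def ln_div ln_sqrt algebra_simps)
  moreover have "p * ln y \<le> p * (y - 1)"
    using p q by (intro mult_left_mono ln_le_minus_one) (auto simp: y_def)
  ultimately show ?thesis by (simp add: algebra_simps)
qed simp

definition bhattacharyya :: "'a set \<Rightarrow> ('a \<Rightarrow> real) \<Rightarrow> ('a \<Rightarrow> real) \<Rightarrow> real" where
  "bhattacharyya A p q = (\<Sum>x\<in>A. sqrt (p x) * sqrt (q x))"

lemma bhattacharyya_bounds:
  assumes p: "is_distr A p" and q: "is_distr A q"
  shows "0 \<le> bhattacharyya A p q" and "bhattacharyya A p q \<le> 1"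
proof -
  show "0 \<le> bhattacharyya A p q"
    using p q by (auto simp: bhattacharyya_def is_distr_def intro: sum_nonneg)
  have "bhattacharyya A p q \<le> (\<Sum>x\<in>A. (p x + q x) / 2)"
    unfolding bhattacharyya_def
  proof (rule sum_mono)
    fix x assume "x \<in> A"
    then have "p x = (sqrt (p x))\<^sup>2" "q x = (sqrt (q x))\<^sup>2"
      using p q by (simp_all add: is_distr_def)
    moreover have "0 \<le> (sqrt (p x) - sqrt (q x))\<^sup>2" by simp
    ultimately show "sqrt (p x) * sqrt (q x) \<le> (p x + q x) / 2"
      by (simp add: power2_eq_square algebra_simps)
  qed
  also have "\<dots> = 1"
    using p q by (simp add: is_distr_def sum.distrib flip: sum_divide_distrib)
  finally show "bhattacharyya A p q \<le> 1" .
qed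

lemma KL_ge_bhattacharyya:
  assumes p: "is_distr A p"
    and abs_cont: "\<And>x. x \<in> A \<Longrightarrow> 0 < p x \<Longrightarrow> 0 < q x"
  shows "2 * (1 - bhattacharyya A p q) \<le> KL A p q"
proof -
  have "2 * (1 - bhattacharyya A p q) = (\<Sum>x\<in>A. 2 * (p x - sqrt (p x) * sqrt (q x)))"
    using p by (simp add: is_distr_def bhattacharyya_def sum_subtractf flip: sum_distrib_left)
  also have "\<dots> \<le> KL A p q"
    unfolding KL_def using p abs_cont
    by (intro sum_mono hellinger_term_le_KL_term) (auto simp: is_distr_def)
  finally show ?thesis .
qed

lemma bhattacharyya_prod_PiE:
  assumes "finite I" and "\<And>i. i \<in> I \<Longrightarrow> finite (A i)"
  shows "bhattacharyya (PiE I A) (\<lambda>a. \<Prod>i\<in>I. p i (a i)) (\<lambda>a. \<Prod>i\<in>I. q i (a i))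
       = (\<Prod>i\<in>I. bhattacharyya (A i) (p i) (q i))"
  unfolding bhattacharyya_def using assms
  by (simp add: prod_sum_PiE real_sqrt_prod prod.distrib)

text \<open>Writing \<open>q - p = (\<surd>q - \<surd>p)(\<surd>q + \<surd>p)\<close>, Cauchy-Schwarz gives
  \<open>\<parallel>q - p\<parallel>\<^sub>1\<^sup>2 \<le> (2 - 2B)(2 + 2B)\<close> for the Bhattacharyya coefficient \<open>B\<close>.\<close>
lemma l1_dist_sq_le_bhattacharyya:
  assumes p: "is_distr A p" and q: "is_distr A q"
  shows "(\<Sum>x\<in>A. \<bar>q x - p x\<bar>)\<^sup>2 \<le> 8 * (1 - bhattacharyya A p q)"
proof -
  define B where "B = bhattacharyya A p q"
  define u where "u x = sqrt (q x) - sqrt (p x)" for x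
  define w where "w x = sqrt (q x) + sqrt (p x)" for x
  have sq: "(sqrt (p x))\<^sup>2 = p x" "(sqrt (q x))\<^sup>2 = q x" if "x \<in> A" for x
    using p q that by (simp_all add: is_distr_def)
  have "(\<Sum>x\<in>A. \<bar>q x - p x\<bar>) = (\<Sum>x\<in>A. \<bar>u x\<bar> * w x)"
  proof (rule sum.cong)
    fix x assume "x \<in> A"
    then have "q x - p x = u x * w x" and "0 \<le> w x"
      using sq[of x] p q by (auto simp: u_def w_def is_distr_def power2_eq_square algebra_simps)
    then show "\<bar>q x - p x\<bar> = \<bar>u x\<bar> * w x" by (simp add: abs_mult)
  qed simp
  then have "(\<Sum>x\<in>A. \<bar>q x - p x\<bar>)\<^sup>2 \<le> (\<Sum>x\<in>A. (u x)\<^sup>2) * (\<Sum>x\<in>A. (w x)\<^sup>2)"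
    using Cauchy_Schwarz_ineq_sum[of "\<lambda>x. \<bar>u x\<bar>" w A] by simp
  also have "\<dots> = (2 - 2 * B) * (2 + 2 * B)"
  proof -
    have "(u x)\<^sup>2 = q x + p x - 2 * (sqrt (p x) * sqrt (q x))"
      and "(w x)\<^sup>2 = q x + p x + 2 * (sqrt (p x) * sqrt (q x))" if "x \<in> A" for x
      using sq[OF that] by (simp_all add: u_def w_def power2_diff power2_sum mult.commute)
    then have "(\<Sum>x\<in>A. (u x)\<^sup>2) = sum q A + sum p A - 2 * B"
      and "(\<Sum>x\<in>A. (w x)\<^sup>2) = sum q A + sum p A + 2 * B"
      by (simp_all add: B_def bhattacharyya_def sum.distrib sum_subtractf sum_distrib_left)
    then show ?thesis using p q by (simp add: is_distr_def)
  qed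
  also have "\<dots> = 8 * (1 - B) - 4 * (1 - B)\<^sup>2"
    by (simp add: power2_eq_square algebra_simps)
  also have "\<dots> \<le> 8 * (1 - B)"
    by simp
  finally show ?thesis by (simp add: B_def)
qed

lemma l1_dist_prod_sq_le_sum_KL:
  assumes "finite I"
    and p: "\<And>i. i \<in> I \<Longrightarrow> is_distr (A i) (p i)" and q: "\<And>i. i \<in> I \<Longrightarrow> is_distr (A i) (q i)"
    and abs_cont: "\<And>i x. i \<in> I \<Longrightarrow> x \<in> A i \<Longrightarrow> 0 < p i x \<Longrightarrow> 0 < q i x"
  shows "(\<Sum>a\<in>PiE I A. \<bar>(\<Prod>i\<in>I. q i (a i)) - (\<Prod>i\<in>I. p i (a i))\<bar>)\<^sup>2
         \<le> 4 * (\<Sum>i\<in>I. KL (A i) (p i) (q i))"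
proof -
  let ?B = "\<lambda>i. bhattacharyya (A i) (p i) (q i)"
  have "(\<Sum>a\<in>PiE I A. \<bar>(\<Prod>i\<in>I. q i (a i)) - (\<Prod>i\<in>I. p i (a i))\<bar>)\<^sup>2
      \<le> 8 * (1 - bhattacharyya (PiE I A) (\<lambda>a. \<Prod>i\<in>I. p i (a i)) (\<lambda>a. \<Prod>i\<in>I. q i (a i)))"
    using assms by (intro l1_dist_sq_le_bhattacharyya is_distr_prod_PiE)
  also have "\<dots> = 8 * (1 - (\<Prod>i\<in>I. ?B i))"
    using \<open>finite I\<close> by (simp add: bhattacharyya_prod_PiE is_distr_finite[OF p])
  also have "\<dots> \<le> 8 * (\<Sum>i\<in>I. 1 - ?B i)"
  proof -
    have "1 - (\<Prod>i\<in>I. ?B i) \<le> (\<Sum>i\<in>I. 1 - ?B i)"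
      using p q by (intro one_minus_prod_le_sum \<open>finite I\<close>) (simp add: bhattacharyya_bounds)
    then show ?thesis by simp
  qed
  also have "\<dots> = 4 * (\<Sum>i\<in>I. 2 * (1 - ?B i))"
    by (simp add: sum_distrib_left)
  also have "\<dots> \<le> 4 * (\<Sum>i\<in>I. KL (A i) (p i) (q i))"
    using assms by (intro mult_left_mono sum_mono KL_ge_bhattacharyya) auto
  finally show ?thesis .
qed

lemma KL_le_KLmax: "KL A (p s) (q s) \<le> KLmax A p q"
  unfolding KLmax_def by (rule Max_ge) auto

lemma l1_dist_prod_policy_sq_le_KLmax:
  assumes "\<And>i. is_policy (Act i) (p i)" and "\<And>i. is_policy (Act i) (q i)"
    and "\<And>i s x. x \<in> Act i \<Longrightarrow> 0 < p i s x \<Longrightarrow> 0 < q i s x"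
  shows "(\<Sum>a\<in>jointActs Act. \<bar>prod_policy q s a - prod_policy p s a\<bar>)\<^sup>2
         \<le> 4 * (\<Sum>i\<in>UNIV. KLmax (Act i) (p i) (q i))"
proof -
  have "(\<Sum>a\<in>jointActs Act. \<bar>prod_policy q s a - prod_policy p s a\<bar>)\<^sup>2
      \<le> 4 * (\<Sum>i\<in>UNIV. KL (Act i) (p i s) (q i s))"
    unfolding jointActs_eq_PiE prod_policy_def
    using assms by (intro l1_dist_prod_sq_le_sum_KL) (auto simp: is_policy_iff_is_distr)
  also have "\<dots> \<le> 4 * (\<Sum>i\<in>UNIV. KLmax (Act i) (p i) (q i))"
    by (simp add: sum_mono KL_le_KLmax)
  finally show ?thesis .
qed

section \<open>Finite discounted MDPs\<close>

lemma sums_of_nat_mult_power: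
  fixes x :: real
  assumes "\<bar>x\<bar> < 1"
  shows "(\<lambda>n. real n * x ^ n) sums (x / (1 - x)\<^sup>2)"
proof -
  have "(\<lambda>n. x * (real (Suc n) * x ^ n)) sums (x * (1 / (1 - x)\<^sup>2))"
    using assms by (intro sums_mult geometric_deriv_sums) auto
  then have "(\<lambda>n. real (Suc n) * x ^ Suc n) sums (x / (1 - x)\<^sup>2)"
    by (simp add: algebra_simps)
  then show ?thesis by (subst (asm) sums_Suc_iff) simp
qed

definition delta :: "'s \<Rightarrow> 's \<Rightarrow> real" where
  "delta s = (\<lambda>s'. if s' = s then 1 else 0)"

lemma delta_commute: "delta s s' = delta s' s"
  by (simp add: delta_def)

lemma sum_delta_mult: "(\<Sum>u\<in>UNIV. delta s u * f u) = (f (s::'s::finite) :: real)"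
proof -
  have "(\<Sum>u\<in>UNIV. delta s u * f u) = (\<Sum>u\<in>UNIV. if u = s then f u else 0)"
    by (rule sum.cong) (auto simp: delta_def)
  then show ?thesis by simp
qed

lemma is_distr_delta: "is_distr UNIV (delta (s::'s::finite))"
  by (simp add: is_distr_def delta_def)

locale finite_mdp =
  fixes P :: "'s::finite \<Rightarrow> 'b \<Rightarrow> 's \<Rightarrow> real" and JA :: "'b set" and g :: real
  assumes P_distr: "\<And>s a. a \<in> JA \<Longrightarrow> is_distr UNIV (P s a)"
    and discount_pos: "0 < g" and discount_less_1: "g < 1"
begin

abbreviation sd where "sd pol mu t \<equiv> state_dist P JA pol mu t"
abbreviation er where "er pol r mu t \<equiv> exp_reward P JA pol r mu t"
abbreviation V where "V pol r \<equiv> Vfun P JA g pol r"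

definition step :: "('s \<Rightarrow> 'b \<Rightarrow> real) \<Rightarrow> ('s \<Rightarrow> real) \<Rightarrow> 's \<Rightarrow> real" where
  "step pol mu = (\<lambda>s'. \<Sum>s\<in>UNIV. \<Sum>a\<in>JA. mu s * pol s a * P s a s')"

definition policy_reward :: "('s \<Rightarrow> 'b \<Rightarrow> real) \<Rightarrow> ('s \<Rightarrow> 'b \<Rightarrow> real) \<Rightarrow> 's \<Rightarrow> real" where
  "policy_reward pol r s = (\<Sum>a\<in>JA. pol s a * r s a)"

lemma state_dist_Suc_step: "sd pol mu (Suc t) = step pol (sd pol mu t)"
  by (simp add: step_def)

lemma state_dist_Suc_shift: "sd pol mu (Suc t) = sd pol (step pol mu) t"
  by (induction t) (simp_all add: step_def)

lemma state_dist_linear: "sd pol mu t s' = (\<Sum>u\<in>UNIV. mu u * sd pol (delta u) t s')"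
proof (induction t arbitrary: s')
  case 0
  show ?case by (simp add: delta_commute[of _ s'] sum_delta_mult mult.commute[of "mu _"])
next
  case (Suc t)
  have "sd pol mu (Suc t) s'
      = (\<Sum>s\<in>UNIV. \<Sum>a\<in>JA. \<Sum>u\<in>UNIV. mu u * (sd pol (delta u) t s * pol s a * P s a s'))"
    by (simp add: Suc sum_distrib_right mult.assoc)
  also have "\<dots> = (\<Sum>u\<in>UNIV. \<Sum>s\<in>UNIV. \<Sum>a\<in>JA. mu u * (sd pol (delta u) t s * pol s a * P s a s'))"
    by (simp only: sum.swap[where A = JA and B = "UNIV :: 's set"]) (rule sum.swap)
  also have "\<dots> = (\<Sum>u\<in>UNIV. mu u * sd pol (delta u) (Suc t) s')"
    by (simp add: sum_distrib_left)
  finally show ?case .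
qed

lemma step_linear: "step pol mu s' = (\<Sum>u\<in>UNIV. mu u * step pol (delta u) s')"
  using state_dist_linear[of pol mu "Suc 0" s'] by (simp only: state_dist_Suc_shift state_dist.simps(1))

lemma is_distr_step:
  assumes pol: "is_policy JA pol" and mu: "is_distr UNIV mu"
  shows "is_distr UNIV (step pol mu)"
proof -
  have "(\<Sum>s'\<in>UNIV. step pol mu s') = (\<Sum>s\<in>UNIV. \<Sum>a\<in>JA. \<Sum>s'\<in>UNIV. mu s * pol s a * P s a s')"
    unfolding step_def by (subst sum.swap) (rule sum.cong[OF refl], rule sum.swap)
  also have "\<dots> = (\<Sum>s\<in>UNIV. mu s * (\<Sum>a\<in>JA. pol s a))"
    using P_distr by (simp add: is_distr_def flip: sum_distrib_left)
  also have "\<dots> = 1"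
    using pol mu by (simp add: is_policy_def is_distr_def)
  finally show ?thesis
    using pol mu P_distr unfolding is_distr_def step_def
    by (auto simp: is_policy_def intro!: sum_nonneg)
qed

lemma is_distr_state_dist:
  assumes "is_policy JA pol" and "is_distr UNIV mu"
  shows "is_distr UNIV (sd pol mu t)"
  using assms(2)
  by (induction t arbitrary: mu)
    (simp_all add: state_dist_Suc_shift is_distr_step[OF assms(1)] del: state_dist.simps(2))

lemma summable_discounted:
  assumes "\<And>t. \<bar>f t\<bar> \<le> B"
  shows "summable (\<lambda>t. g ^ t * f t)"
proof (rule summable_comparison_test'[where g = "\<lambda>t. B * g ^ t" and N = 0])
  show "summable (\<lambda>t. B * g ^ t)"
    using discount_pos discount_less_1 by (intro summable_mult summable_geometric) auto
  show "norm (g ^ t * f t) \<le> B * g ^ t" for t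
    using discount_pos assms[of t] by (simp add: abs_mult mult.commute mult_left_mono)
qed

lemma exp_reward_eq: "er pol r mu t = (\<Sum>s\<in>UNIV. sd pol mu t s * policy_reward pol r s)"
  by (simp add: exp_reward_def policy_reward_def)

lemma summable_discounted_reward:
  assumes "is_policy JA pol" and "is_distr UNIV mu"
  shows "summable (\<lambda>t. g ^ t * er pol r mu t)"
proof (rule summable_discounted)
  show "\<bar>er pol r mu t\<bar> \<le> (\<Sum>s\<in>UNIV. \<bar>policy_reward pol r s\<bar>)" for t
    unfolding exp_reward_eq
    by (rule abs_expectation_le[OF is_distr_state_dist[OF assms]]) (rule member_le_sum, auto)
qed

lemma exp_reward_linear: "er pol r mu t = (\<Sum>u\<in>UNIV. mu u * er pol r (delta u) t)"
proof -
  have "er pol r mu t = (\<Sum>s\<in>UNIV. \<Sum>u\<in>UNIV. mu u * (sd pol (delta u) t s * policy_reward pol r s))"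
    by (simp add: exp_reward_eq state_dist_linear[of pol mu t] sum_distrib_right mult.assoc)
  also have "\<dots> = (\<Sum>u\<in>UNIV. mu u * er pol r (delta u) t)"
    by (subst sum.swap) (simp add: exp_reward_eq sum_distrib_left)
  finally show ?thesis .
qed

lemma Vfun_sums:
  assumes "is_policy JA pol"
  shows "(\<lambda>t. g ^ t * er pol r (delta s) t) sums V pol r s"
  using summable_sums[OF summable_discounted_reward[OF assms is_distr_delta]]
  by (simp add: Vfun_def delta_def)

lemma discounted_reward_sums:
  assumes "is_policy JA pol"
  shows "(\<lambda>t. g ^ t * er pol r mu t) sums (\<Sum>u\<in>UNIV. mu u * V pol r u)"
proof -
  have "(\<lambda>t. \<Sum>u\<in>UNIV. mu u * (g ^ t * er pol r (delta u) t)) sums (\<Sum>u\<in>UNIV. mu u * V pol r u)"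
    by (intro sums_sum sums_mult Vfun_sums[OF assms])
  then show ?thesis
    by (simp add: exp_reward_linear[of pol r mu] sum_distrib_left mult.left_commute)
qed

lemma step_delta: "step pol (delta s) u = (\<Sum>a\<in>JA. pol s a * P s a u)"
proof -
  have "step pol (delta s) u = (\<Sum>a\<in>JA. \<Sum>s'\<in>UNIV. delta s s' * (pol s' a * P s' a u))"
    unfolding step_def by (subst sum.swap) (simp add: mult.assoc)
  then show ?thesis by (simp add: sum_delta_mult)
qed

lemma bellman:
  assumes "is_policy JA pol"
  shows "V pol r s = policy_reward pol r s + g * (\<Sum>u\<in>UNIV. step pol (delta s) u * V pol r u)"
proof -
  have "(\<lambda>t. g ^ Suc t * er pol r (delta s) (Suc t)) sums (V pol r s - er pol r (delta s) 0)"
    using Vfun_sums[OF assms, of r s] by (subst sums_Suc_iff) simp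
  moreover have "(\<lambda>t. g ^ Suc t * er pol r (delta s) (Suc t))
      = (\<lambda>t. g * (g ^ t * er pol r (step pol (delta s)) t))"
    by (simp only: exp_reward_def state_dist_Suc_shift power_Suc mult.assoc)
  moreover have "(\<lambda>t. g * (g ^ t * er pol r (step pol (delta s)) t))
      sums (g * (\<Sum>u\<in>UNIV. step pol (delta s) u * V pol r u))"
    by (intro sums_mult discounted_reward_sums[OF assms])
  moreover have "er pol r (delta s) 0 = policy_reward pol r s"
    by (simp add: exp_reward_eq sum_delta_mult)
  ultimately show ?thesis
    by (metis add_diff_cancel_left' diff_add_cancel sums_unique2)
qed

lemma Qfun_eq:
  assumes "is_policy JA pol"
  shows "Qfun P JA g pol r s a = r s a + g * (\<Sum>u\<in>UNIV. P s a u * V pol r u)"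
proof -
  have "(\<lambda>t. g ^ Suc t * er pol r (P s a) t) sums (g * (\<Sum>u\<in>UNIV. P s a u * V pol r u))"
    using sums_mult[OF discounted_reward_sums[OF assms, of r "P s a"], of g]
    by (simp add: mult.assoc)
  then show ?thesis by (simp add: Qfun_def sums_iff)
qed

lemma advantage_average:
  assumes pol: "is_policy JA pol" and pol': "is_policy JA pol'"
  shows "(\<Sum>a\<in>JA. pol' s a * Adv P JA g pol r s a)
         = policy_reward pol' r s + g * (\<Sum>u\<in>UNIV. step pol' (delta s) u * V pol r u) - V pol r s"
proof -
  define X where "X a = (\<Sum>u\<in>UNIV. P s a u * V pol r u)" for a
  have "(\<Sum>a\<in>JA. pol' s a * Adv P JA g pol r s a)
      = (\<Sum>a\<in>JA. pol' s a * r s a + g * (pol' s a * X a) - pol' s a * V pol r s)"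
    by (simp add: Adv_def Qfun_eq[OF pol] X_def algebra_simps)
  also have "\<dots> = policy_reward pol' r s + g * (\<Sum>a\<in>JA. pol' s a * X a)
      - (\<Sum>a\<in>JA. pol' s a) * V pol r s"
    unfolding policy_reward_def sum_subtractf sum.distrib by (simp only: sum_distrib_left sum_distrib_right)
  also have "(\<Sum>a\<in>JA. pol' s a * X a) = (\<Sum>u\<in>UNIV. step pol' (delta s) u * V pol r u)"
    by (simp add: X_def step_delta sum_distrib_left sum_distrib_right mult.assoc
        sum.swap[where A = JA and B = "UNIV :: 's set"])
  also have "(\<Sum>a\<in>JA. pol' s a) = 1"
    using pol' by (simp add: is_policy_def)
  finally show ?thesis by simp
qed

lemma advantage_average_self:
  assumes "is_policy JA pol"
  shows "(\<Sum>a\<in>JA. pol s a * Adv P JA g pol r s a) = 0"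
  using advantage_average[OF assms assms, of s r] bellman[OF assms, of r s] by linarith

section \<open>Performance difference\<close>

lemma expectation_state_dist_Suc:
  "(\<Sum>u\<in>UNIV. sd pol mu (Suc t) u * f u)
   = (\<Sum>s\<in>UNIV. sd pol mu t s * (\<Sum>u\<in>UNIV. step pol (delta s) u * f u))"
proof -
  have "(\<Sum>u\<in>UNIV. sd pol mu (Suc t) u * f u)
      = (\<Sum>u\<in>UNIV. \<Sum>s\<in>UNIV. sd pol mu t s * (step pol (delta s) u * f u))"
    by (simp only: state_dist_Suc_step step_linear[of pol "sd pol mu t"] sum_distrib_right mult.assoc)
  also have "\<dots> = (\<Sum>s\<in>UNIV. sd pol mu t s * (\<Sum>u\<in>UNIV. step pol (delta s) u * f u))"
    by (subst sum.swap) (simp only: sum_distrib_left)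
  finally show ?thesis .
qed

text \<open>The advantage average of \<open>pol'\<close> at time \<open>t\<close> is \<open>r\<^sub>t + g W\<^sub>t\<^sub>+\<^sub>1 - W\<^sub>t\<close> with
  \<open>W\<^sub>t\<close> the expected \<open>pol\<close>-value of the state at time \<open>t\<close> under \<open>pol'\<close>, so the
  discounted series telescopes.\<close>
lemma performance_difference:
  assumes pol: "is_policy JA pol" and pol': "is_policy JA pol'" and d0: "is_distr UNIV d0"
  shows "(\<lambda>t. g ^ t * (\<Sum>s\<in>UNIV. sd pol' d0 t s * (\<Sum>a\<in>JA. pol' s a * Adv P JA g pol r s a)))
          sums ((\<Sum>t. g ^ t * er pol' r d0 t) - (\<Sum>t. g ^ t * er pol r d0 t))"
proof -
  define W where "W t = (\<Sum>s\<in>UNIV. sd pol' d0 t s * V pol r s)" for t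
  have telescoping: "g ^ t * (\<Sum>s\<in>UNIV. sd pol' d0 t s * (\<Sum>a\<in>JA. pol' s a * Adv P JA g pol r s a))
      = g ^ t * er pol' r d0 t + (g ^ Suc t * W (Suc t) - g ^ t * W t)" for t
    unfolding W_def expectation_state_dist_Suc exp_reward_eq advantage_average[OF pol pol']
    by (simp add: algebra_simps sum.distrib sum_subtractf sum_distrib_left)
  have "(\<lambda>t. g ^ Suc t * W (Suc t) - g ^ t * W t) sums (0 - g ^ 0 * W 0)"
  proof (rule telescope_sums, rule summable_LIMSEQ_zero, rule summable_discounted)
    show "\<bar>W t\<bar> \<le> (\<Sum>s\<in>UNIV. \<bar>V pol r s\<bar>)" for t
      unfolding W_def
      by (rule abs_expectation_le[OF is_distr_state_dist[OF pol' d0]]) (rule member_le_sum, auto)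
  qed
  moreover have "W 0 = (\<Sum>t. g ^ t * er pol r d0 t)"
    using discounted_reward_sums[OF pol, of r d0] by (simp add: W_def sums_iff mult.commute)
  ultimately have "(\<lambda>t. g ^ Suc t * W (Suc t) - g ^ t * W t) sums (- (\<Sum>t. g ^ t * er pol r d0 t))"
    by simp
  from sums_add[OF summable_sums[OF summable_discounted_reward[OF pol' d0, of r]] this]
  show ?thesis by (simp only: telescoping diff_conv_add_uminus)
qed

lemma visit_sums:
  assumes pol: "is_policy JA pol" and d0: "is_distr UNIV d0"
  shows "(\<lambda>t. g ^ t * (\<Sum>s\<in>UNIV. sd pol d0 t s * f s)) sums (\<Sum>s\<in>UNIV. visit P JA g d0 pol s * f s)"
proof -
  have "(\<lambda>t. g ^ t * sd pol d0 t s) sums visit P JA g d0 pol s" for s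
  proof -
    have "\<bar>sd pol d0 t s\<bar> \<le> 1" for t
      using is_distr_state_dist[OF pol d0, of t] member_le_sum[of s UNIV "sd pol d0 t"]
      by (auto simp: is_distr_def)
    then show ?thesis unfolding visit_def by (intro summable_sums summable_discounted)
  qed
  then have "(\<lambda>t. \<Sum>s\<in>UNIV. g ^ t * sd pol d0 t s * f s) sums (\<Sum>s\<in>UNIV. visit P JA g d0 pol s * f s)"
    by (intro sums_sum sums_mult2)
  then show ?thesis by (simp add: sum_distrib_left mult.assoc)
qed

lemma l1_dist_step_le:
  assumes mu: "is_distr UNIV mu" and pol': "is_policy JA pol'"
  shows "(\<Sum>u\<in>UNIV. \<bar>step pol' mu' u - step pol mu u\<bar>)
         \<le> (\<Sum>s\<in>UNIV. \<bar>mu' s - mu s\<bar>) + (\<Sum>s\<in>UNIV. mu s * (\<Sum>a\<in>JA. \<bar>pol' s a - pol s a\<bar>))"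
proof -
  define F where "F s a = (mu' s - mu s) * pol' s a + mu s * (pol' s a - pol s a)" for s a
  have F_le: "\<bar>F s a\<bar> \<le> \<bar>mu' s - mu s\<bar> * pol' s a + mu s * \<bar>pol' s a - pol s a\<bar>" if "a \<in> JA" for s a
    using mu pol' that unfolding F_def
    by (intro order_trans[OF abs_triangle_ineq]) (simp add: is_distr_def is_policy_def abs_mult)
  have "(\<Sum>u\<in>UNIV. \<bar>step pol' mu' u - step pol mu u\<bar>)
      = (\<Sum>u\<in>UNIV. \<bar>\<Sum>s\<in>UNIV. \<Sum>a\<in>JA. F s a * P s a u\<bar>)"
    by (simp add: step_def F_def sum_subtractf[symmetric] algebra_simps)
  also have "\<dots> \<le> (\<Sum>u\<in>UNIV. \<Sum>s\<in>UNIV. \<Sum>a\<in>JA. \<bar>F s a * P s a u\<bar>)"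
    by (intro sum_mono) (rule order_trans[OF sum_abs sum_mono[OF sum_abs]])
  also have "\<dots> = (\<Sum>u\<in>UNIV. \<Sum>s\<in>UNIV. \<Sum>a\<in>JA. \<bar>F s a\<bar> * P s a u)"
    using P_distr by (simp add: is_distr_def abs_mult)
  also have "\<dots> = (\<Sum>s\<in>UNIV. \<Sum>a\<in>JA. \<Sum>u\<in>UNIV. \<bar>F s a\<bar> * P s a u)"
    by (subst sum.swap) (rule sum.cong[OF refl], rule sum.swap)
  also have "\<dots> = (\<Sum>s\<in>UNIV. \<Sum>a\<in>JA. \<bar>F s a\<bar>)"
    using P_distr by (simp add: is_distr_def flip: sum_distrib_left)
  also have "\<dots> \<le> (\<Sum>s\<in>UNIV. \<Sum>a\<in>JA. \<bar>mu' s - mu s\<bar> * pol' s a + mu s * \<bar>pol' s a - pol s a\<bar>)"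
    by (intro sum_mono F_le)
  also have "\<dots> = (\<Sum>s\<in>UNIV. \<bar>mu' s - mu s\<bar>) + (\<Sum>s\<in>UNIV. mu s * (\<Sum>a\<in>JA. \<bar>pol' s a - pol s a\<bar>))"
    using pol' by (simp add: sum.distrib is_policy_def flip: sum_distrib_left)
  finally show ?thesis .
qed

lemma l1_dist_state_dist_le:
  assumes pol: "is_policy JA pol" and pol': "is_policy JA pol'" and d0: "is_distr UNIV d0"
    and c: "\<And>s. (\<Sum>a\<in>JA. \<bar>pol' s a - pol s a\<bar>) \<le> c"
  shows "(\<Sum>s\<in>UNIV. \<bar>sd pol' d0 t s - sd pol d0 t s\<bar>) \<le> c * real t"
proof (induction t)
  case (Suc t)
  have md: "is_distr UNIV (sd pol d0 t)"
    by (rule is_distr_state_dist[OF pol d0])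
  have "(\<Sum>s\<in>UNIV. sd pol d0 t s * (\<Sum>a\<in>JA. \<bar>pol' s a - pol s a\<bar>)) \<le> c"
    using md c by (intro order_trans[OF abs_ge_self abs_expectation_le]) auto
  then show ?case
    using Suc l1_dist_step_le[OF md pol', of "sd pol' d0 t" pol]
    by (simp add: state_dist_Suc_step algebra_simps del: state_dist.simps(2))
qed simp

definition total_advantage ::
    "('i::finite \<Rightarrow> 's \<Rightarrow> 'b \<Rightarrow> real) \<Rightarrow> ('s \<Rightarrow> 'b \<Rightarrow> real) \<Rightarrow> ('s \<Rightarrow> 'b \<Rightarrow> real) \<Rightarrow> 's \<Rightarrow> real" where
  "total_advantage R pol pol' s = (\<Sum>i\<in>UNIV. \<Sum>a\<in>JA. pol' s a * Adv P JA g pol (R i) s a)"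

lemma abs_total_advantage_le:
  fixes R :: "'i::finite \<Rightarrow> 's \<Rightarrow> 'b \<Rightarrow> real"
  assumes pol: "is_policy JA pol"
    and c: "(\<Sum>a\<in>JA. \<bar>pol' s a - pol s a\<bar>) \<le> c"
    and eps: "\<And>a. a \<in> JA \<Longrightarrow> \<bar>\<Sum>i\<in>UNIV. Adv P JA g pol (R i) s a\<bar> \<le> eps"
  shows "\<bar>total_advantage R pol pol' s\<bar> \<le> c * eps"
proof -
  define A where "A a = (\<Sum>i\<in>UNIV. Adv P JA g pol (R i) s a)" for a
  have swap: "total_advantage R pol q s = (\<Sum>a\<in>JA. q s a * A a)" for q
    unfolding total_advantage_def A_def sum_distrib_left by (rule sum.swap)
  have "(\<Sum>a\<in>JA. pol s a * A a) = 0"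
    unfolding swap[symmetric] total_advantage_def by (simp add: advantage_average_self[OF pol])
  then have "total_advantage R pol pol' s = (\<Sum>a\<in>JA. (pol' s a - pol s a) * A a)"
    by (simp add: swap left_diff_distrib sum_subtractf)
  also have "\<bar>\<dots>\<bar> \<le> (\<Sum>a\<in>JA. \<bar>pol' s a - pol s a\<bar> * eps)"
    using eps by (intro order_trans[OF sum_abs sum_mono]) (simp add: A_def abs_mult mult_left_mono)
  also have "\<dots> = (\<Sum>a\<in>JA. \<bar>pol' s a - pol s a\<bar>) * eps"
    by (rule sum_distrib_right[symmetric])
  also have "\<dots> \<le> c * eps"
  proof (rule mult_right_mono[OF c])
    obtain a where "a \<in> JA"
      using pol unfolding is_policy_def by fastforce
    then show "0 \<le> eps" using eps[of a] by linarith
  qed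
  finally show ?thesis .
qed

lemma eta_diff_sums:
  fixes R :: "'i::finite \<Rightarrow> 's \<Rightarrow> 'b \<Rightarrow> real"
  assumes "is_policy JA pol" and "is_policy JA pol'" and "is_distr UNIV d0"
  shows "(\<lambda>t. g ^ t * (\<Sum>s\<in>UNIV. sd pol' d0 t s * total_advantage R pol pol' s))
          sums (eta P JA g d0 R pol' - eta P JA g d0 R pol)"
proof -
  have "(\<lambda>t. \<Sum>i\<in>UNIV. g ^ t * (\<Sum>s\<in>UNIV. sd pol' d0 t s * (\<Sum>a\<in>JA. pol' s a * Adv P JA g pol (R i) s a)))
      sums (\<Sum>i\<in>UNIV. (\<Sum>t. g ^ t * er pol' (R i) d0 t) - (\<Sum>t. g ^ t * er pol (R i) d0 t))"
    by (intro sums_sum performance_difference[OF assms])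
  moreover have "(\<Sum>i\<in>UNIV. g ^ t * (\<Sum>s\<in>UNIV. sd pol' d0 t s * (\<Sum>a\<in>JA. pol' s a * Adv P JA g pol (R i) s a)))
      = g ^ t * (\<Sum>s\<in>UNIV. sd pol' d0 t s * total_advantage R pol pol' s)" for t
    unfolding total_advantage_def sum_distrib_left by (rule sum.swap)
  ultimately show ?thesis
    by (simp add: eta_def sum_subtractf)
qed

lemma zeta_sums:
  fixes R :: "'i::finite \<Rightarrow> 's \<Rightarrow> 'b \<Rightarrow> real"
  assumes "is_policy JA pol" and "is_distr UNIV d0"
  shows "(\<lambda>t. g ^ t * (\<Sum>s\<in>UNIV. sd pol d0 t s * total_advantage R pol pol' s))
          sums zeta P JA g d0 R pol (\<lambda>_. pol')"
proof -
  have "zeta P JA g d0 R pol (\<lambda>_. pol') = (\<Sum>s\<in>UNIV. visit P JA g d0 pol s * total_advantage R pol pol' s)"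
    unfolding zeta_def total_advantage_def sum_distrib_left by (rule sum.swap)
  then show ?thesis using visit_sums[OF assms] by simp
qed

lemma eta_ge_eta_add_zeta:
  assumes pol: "is_policy JA pol" and pol': "is_policy JA pol'" and d0: "is_distr UNIV d0"
    and l1: "\<And>s. (\<Sum>a\<in>JA. \<bar>pol' s a - pol s a\<bar>)\<^sup>2 \<le> 4 * D"
    and eps: "\<And>s a. a \<in> JA \<Longrightarrow> \<bar>\<Sum>i\<in>UNIV. Adv P JA g pol (R i) s a\<bar> \<le> eps"
  shows "eta P JA g d0 R pol' \<ge> eta P JA g d0 R pol + zeta P JA g d0 R pol (\<lambda>_. pol')
           - 4 * g * eps / (1 - g)\<^sup>2 * D"
proof -
  define C where "C = 4 * D"
  have C: "(\<Sum>a\<in>JA. \<bar>pol' s a - pol s a\<bar>)\<^sup>2 \<le> C" for s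
    unfolding C_def by (rule l1)
  define c where "c = sqrt C"
  have c: "(\<Sum>a\<in>JA. \<bar>pol' s a - pol s a\<bar>) \<le> c" for s
    unfolding c_def using C by (rule real_le_rsqrt)
  have "0 \<le> C"
    by (rule order_trans[OF zero_le_power2 C])
  then have "c * c = C"
    by (simp add: c_def)
  have adv: "\<bar>total_advantage R pol pol' s\<bar> \<le> c * eps" for s
    by (rule abs_total_advantage_le[OF pol c eps])
  have "0 \<le> c * eps"
    using adv[of undefined] by (meson abs_ge_zero order_trans)
  have per_step: "- (real t * g ^ t * (C * eps))
      \<le> g ^ t * (\<Sum>s\<in>UNIV. sd pol' d0 t s * total_advantage R pol pol' s)
        - g ^ t * (\<Sum>s\<in>UNIV. sd pol d0 t s * total_advantage R pol pol' s)" for t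
  proof -
    have "\<bar>\<Sum>s\<in>UNIV. (sd pol' d0 t s - sd pol d0 t s) * total_advantage R pol pol' s\<bar>
        \<le> (\<Sum>s\<in>UNIV. \<bar>sd pol' d0 t s - sd pol d0 t s\<bar>) * (c * eps)"
      unfolding sum_distrib_right using adv
      by (intro order_trans[OF sum_abs sum_mono]) (simp add: abs_mult mult_left_mono)
    also have "\<dots> \<le> c * real t * (c * eps)"
      by (rule mult_right_mono[OF l1_dist_state_dist_le[OF pol pol' d0 c] \<open>0 \<le> c * eps\<close>])
    also have "\<dots> = real t * (C * eps)"
      by (simp flip: \<open>c * c = C\<close> add: mult_ac)
    finally have "- (real t * (C * eps))
        \<le> (\<Sum>s\<in>UNIV. sd pol' d0 t s * total_advantage R pol pol' s)
          - (\<Sum>s\<in>UNIV. sd pol d0 t s * total_advantage R pol pol' s)"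
      unfolding left_diff_distrib sum_subtractf by (subst minus_le_iff) (rule abs_le_D2)
    moreover have "0 \<le> g ^ t"
      using discount_pos by simp
    ultimately have "g ^ t * (- (real t * (C * eps)))
        \<le> g ^ t * ((\<Sum>s\<in>UNIV. sd pol' d0 t s * total_advantage R pol pol' s)
          - (\<Sum>s\<in>UNIV. sd pol d0 t s * total_advantage R pol pol' s))"
      by (rule mult_left_mono)
    then show ?thesis
      by (simp only: right_diff_distrib mult_minus_right mult.left_commute)
  qed
  have "(\<lambda>t. - (real t * g ^ t * (C * eps))) sums - (g / (1 - g)\<^sup>2 * (C * eps))"
    using discount_pos discount_less_1 by (intro sums_minus sums_mult2 sums_of_nat_mult_power) auto
  from sums_le[OF per_step this sums_diff[OF eta_diff_sums[OF pol pol' d0] zeta_sums[OF pol d0]]]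
  moreover have "g / (1 - g)\<^sup>2 * (C * eps) = 4 * g * eps / (1 - g)\<^sup>2 * D"
    by (simp add: C_def field_simps)
  ultimately show ?thesis by linarith
qed

end

section \<open>Surrogate objective\<close>

lemma young_weighted_sum_diff_ge:
  fixes v :: "'s::finite \<Rightarrow> real" and x y f :: "'s \<Rightarrow> 'b \<Rightarrow> real"
  assumes f: "\<And>s a. a \<in> A \<Longrightarrow> \<bar>f s a\<bar> \<le> m"
  shows "(\<Sum>s\<in>UNIV. v s * (\<Sum>a\<in>A. x s a * f s a)) - (\<Sum>s\<in>UNIV. v s * (\<Sum>a\<in>A. y s a * f s a))
     \<ge> - (1/2 * m * real (card A) * (\<Sum>s\<in>UNIV. (v s)\<^sup>2)
          + 1/2 * m * (\<Sum>s\<in>UNIV. \<Sum>a\<in>A. (y s a - x s a)\<^sup>2))"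
proof -
  have pointwise: "- (1/2 * m * (v s)\<^sup>2 + 1/2 * m * (y s a - x s a)\<^sup>2) \<le> v s * (x s a - y s a) * f s a"
    if a: "a \<in> A" for s a
  proof -
    have "\<bar>v s * (x s a - y s a)\<bar> \<le> ((v s)\<^sup>2 + (y s a - x s a)\<^sup>2) / 2"
      using sum_squares_bound[of "\<bar>v s\<bar>" "\<bar>x s a - y s a\<bar>"]
      by (simp add: abs_mult power2_commute[of "x s a"])
    then have "\<bar>v s * (x s a - y s a) * f s a\<bar> \<le> ((v s)\<^sup>2 + (y s a - x s a)\<^sup>2) / 2 * m"
      unfolding abs_mult[of _ "f s a"] using f[OF a, of s] by (intro mult_mono) auto
    moreover have "((v s)\<^sup>2 + (y s a - x s a)\<^sup>2) / 2 * m
        = 1/2 * m * (v s)\<^sup>2 + 1/2 * m * (y s a - x s a)\<^sup>2"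
      by (simp add: algebra_simps)
    ultimately show ?thesis by linarith
  qed
  have "(\<Sum>s\<in>UNIV. v s * (\<Sum>a\<in>A. x s a * f s a)) - (\<Sum>s\<in>UNIV. v s * (\<Sum>a\<in>A. y s a * f s a))
      = (\<Sum>s\<in>UNIV. \<Sum>a\<in>A. v s * (x s a - y s a) * f s a)"
    by (simp add: sum_subtractf[symmetric] sum_distrib_left algebra_simps)
  also have "\<dots> \<ge> (\<Sum>s\<in>UNIV. \<Sum>a\<in>A. - (1/2 * m * (v s)\<^sup>2 + 1/2 * m * (y s a - x s a)\<^sup>2))"
    by (intro sum_mono pointwise)
  also have "(\<Sum>s\<in>UNIV. \<Sum>a\<in>A. - (1/2 * m * (v s)\<^sup>2 + 1/2 * m * (y s a - x s a)\<^sup>2))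
      = - (1/2 * m * real (card A) * (\<Sum>s\<in>UNIV. (v s)\<^sup>2)
          + 1/2 * m * (\<Sum>s\<in>UNIV. \<Sum>a\<in>A. (y s a - x s a)\<^sup>2))"
    by (simp only: sum_negf sum.distrib sum_constant flip: sum_distrib_left)
      (simp add: sum_distrib_left mult_ac)
  finally show ?thesis .
qed

lemma zeta_const_ge_zeta:
  fixes R :: "'i::finite \<Rightarrow> 's::finite \<Rightarrow> 'b \<Rightarrow> real"
  assumes m: "\<And>i s a. a \<in> JA \<Longrightarrow> \<bar>Adv P JA g pol (R i) s a\<bar> \<le> m i"
  shows "zeta P JA g d0 R pol (\<lambda>_. pol') \<ge> zeta P JA g d0 R pol Pit
     - (\<Sum>i\<in>UNIV. 1/2 * m i * real (card JA) * (\<Sum>s\<in>UNIV. (visit P JA g d0 pol s)\<^sup>2))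
     - (\<Sum>i\<in>UNIV. 1/2 * m i * (\<Sum>s\<in>UNIV. \<Sum>a\<in>JA. (Pit i s a - pol' s a)\<^sup>2))"
proof -
  have "(\<Sum>i\<in>UNIV. - (1/2 * m i * real (card JA) * (\<Sum>s\<in>UNIV. (visit P JA g d0 pol s)\<^sup>2)
          + 1/2 * m i * (\<Sum>s\<in>UNIV. \<Sum>a\<in>JA. (Pit i s a - pol' s a)\<^sup>2)))
      \<le> (\<Sum>i\<in>UNIV. (\<Sum>s\<in>UNIV. visit P JA g d0 pol s * (\<Sum>a\<in>JA. pol' s a * Adv P JA g pol (R i) s a))
          - (\<Sum>s\<in>UNIV. visit P JA g d0 pol s * (\<Sum>a\<in>JA. Pit i s a * Adv P JA g pol (R i) s a)))"
    by (intro sum_mono young_weighted_sum_diff_ge m)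
  then show ?thesis
    by (simp add: zeta_def sum_subtractf sum_negf sum.distrib)
qed

theorem theorem1:
  fixes Act :: "'i::finite \<Rightarrow> 'a set"
    and P :: "'s::finite \<Rightarrow> ('i \<Rightarrow> 'a) \<Rightarrow> 's \<Rightarrow> real"
    and R :: "'i \<Rightarrow> 's \<Rightarrow> ('i \<Rightarrow> 'a) \<Rightarrow> real"
    and g :: real
    and d0 :: "'s \<Rightarrow> real"
    and pold pnew :: "'i \<Rightarrow> 's \<Rightarrow> 'a \<Rightarrow> real"
    and pt :: "'i \<Rightarrow> 'i \<Rightarrow> 's \<Rightarrow> 'a \<Rightarrow> real"
  defines "JA \<equiv> jointActs Act"
    and "piold \<equiv> prod_policy pold"
    and "pinew \<equiv> prod_policy pnew"
    and "Pit \<equiv> (\<lambda>i. prod_policy (pt i))"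
  assumes Act_fin: "\<And>i. finite (Act i)"
    and Act_ne: "\<And>i. Act i \<noteq> {}"
    and g_pos: "0 < g" and g_lt1: "g < 1"
    and d0_nonneg: "\<And>s. 0 \<le> d0 s" and d0_sum: "(\<Sum>s\<in>UNIV. d0 s) = 1"
    and P_nonneg: "\<And>s a s'. a \<in> JA \<Longrightarrow> 0 \<le> P s a s'"
    and P_sum: "\<And>s a. a \<in> JA \<Longrightarrow> (\<Sum>s'\<in>UNIV. P s a s') = 1"
    and pold_pol: "\<And>i. is_policy (Act i) (pold i)"
    and pnew_pol: "\<And>i. is_policy (Act i) (pnew i)"
    and pt_pol: "\<And>i j. is_policy (Act j) (pt i j)"
    and pt_diag: "\<And>i. pt i i = pnew i"
    and abs_cont: "\<And>i s a. a \<in> Act i \<Longrightarrow> 0 < pold i s a \<Longrightarrow> 0 < pnew i s a"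
  shows "eta P JA g d0 R pinew \<ge>
           eta P JA g d0 R piold + zeta P JA g d0 R piold Pit
           - 4 * g * Max ((\<lambda>(s, a). \<bar>\<Sum>i\<in>UNIV. Adv P JA g piold (R i) s a\<bar>) ` (UNIV \<times> JA)) / (1 - g)^2
               * (\<Sum>i\<in>UNIV. KLmax (Act i) (pold i) (pnew i))
           - (\<Sum>i\<in>UNIV. 1/2 * Max ((\<lambda>(s, a). \<bar>Adv P JA g piold (R i) s a\<bar>) ` (UNIV \<times> JA))
               * real (card JA) * (\<Sum>s\<in>UNIV. (visit P JA g d0 piold s)^2))
           - (\<Sum>i\<in>UNIV. 1/2 * Max ((\<lambda>(s, a). \<bar>Adv P JA g piold (R i) s a\<bar>) ` (UNIV \<times> JA))
                * (\<Sum>s\<in>UNIV. \<Sum>a\<in>JA. (Pit i s a - pinew s a)^2))"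
proof -
  \<comment> \<open>The bound holds for every family \<open>Pit\<close>.\<close>
  interpret finite_mdp P JA g
    using P_nonneg P_sum g_pos g_lt1 by unfold_locales (auto simp: is_distr_def)
  have pol_old: "is_policy JA piold" and pol_new: "is_policy JA pinew"
    unfolding JA_def piold_def pinew_def using pold_pol pnew_pol by (auto intro: is_policy_prod_policy)
  have d0: "is_distr UNIV d0"
    using d0_nonneg d0_sum by (simp add: is_distr_def)
  have l1: "(\<Sum>a\<in>JA. \<bar>pinew s a - piold s a\<bar>)\<^sup>2 \<le> 4 * (\<Sum>i\<in>UNIV. KLmax (Act i) (pold i) (pnew i))"
    for s unfolding JA_def pinew_def piold_def
    using pold_pol pnew_pol abs_cont by (rule l1_dist_prod_policy_sq_le_KLmax)
  have "finite JA"
    using Act_fin unfolding JA_def jointActs_eq_PiE by (intro finite_PiE) auto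
  then have le_Max: "f s a \<le> Max ((\<lambda>(s, a). f s a) ` (UNIV \<times> JA))" if "a \<in> JA"
    for f :: "'s \<Rightarrow> ('i \<Rightarrow> 'a) \<Rightarrow> real" and s a
    using that by (intro Max_ge) force+
  have "eta P JA g d0 R pinew \<ge> eta P JA g d0 R piold + zeta P JA g d0 R piold (\<lambda>_. pinew)
      - 4 * g * Max ((\<lambda>(s, a). \<bar>\<Sum>i\<in>UNIV. Adv P JA g piold (R i) s a\<bar>) ` (UNIV \<times> JA)) / (1 - g)^2
        * (\<Sum>i\<in>UNIV. KLmax (Act i) (pold i) (pnew i))"
    by (rule eta_ge_eta_add_zeta[OF pol_old pol_new d0 l1]) (rule le_Max)
  moreover have "zeta P JA g d0 R piold (\<lambda>_. pinew) \<ge> zeta P JA g d0 R piold Pit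
      - (\<Sum>i\<in>UNIV. 1/2 * Max ((\<lambda>(s, a). \<bar>Adv P JA g piold (R i) s a\<bar>) ` (UNIV \<times> JA))
          * real (card JA) * (\<Sum>s\<in>UNIV. (visit P JA g d0 piold s)^2))
      - (\<Sum>i\<in>UNIV. 1/2 * Max ((\<lambda>(s, a). \<bar>Adv P JA g piold (R i) s a\<bar>) ` (UNIV \<times> JA))
          * (\<Sum>s\<in>UNIV. \<Sum>a\<in>JA. (Pit i s a - pinew s a)^2))"
    by (rule zeta_const_ge_zeta) (rule le_Max)
  ultimately show ?thesis by linarith
qed

end
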